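(* Let $X_1,X_2$ be diffeological spaces, let $Y\subseteq X_1$ and let $f:Y\to X_2$ be a diffeomorphism onto $f(Y)$ such that $i^*(\Omega^1(X_1))=(f^*j^* )(\Omega^1(X_2))$, where $i:Y\hookrightarrow X_1$ and $j:f(Y)\hookrightarrow X_2$ are the inclusions. Let $y\in Y$, and suppose that $\Lambda^1_y(X_1)$ and $\Lambda^1_{f(y)}(X_2)$ are finite-dimensional and carry compatible pseudo-metrics (scalar products) $g_1^\Lambda(y)$ and $g_2^\Lambda(f(y))$. Then for any $\alpha_1\in\Lambda^1_y(X_1)$ and $\alpha_2\in\Lambda^1_{f(y)}(X_2)$, the functionals $\alpha_1^*:=g_1^\Lambda(y)(\alpha_1,\cdot)\in(\Lambda^1_y(X_1))^*$ and $\alpha_2^*:=g_2^\Lambda(f(y))(\alpha_2,\cdot)\in(\Lambda^1_{f(y)}(X_2))^*$ are compatible if and only if $\alpha_1$ and $\alpha_2$ are compatible.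
   Context: A differential 1-form $\omega$ on a diffeological space $X$ assigns to each plot $p:U\to X$ a smooth 1-form $\omega(p)$ on $U$ with $\omega(p\circ h)=h^*\omega(p)$ for smooth $h$; $\Omega^1(X)$ is the space of these, and smooth maps induce pullbacks. $\Omega^1_x(X)$ is the subspace of forms with $\omega(p)(0)=0$ for every plot $p$ with $p(0)=x$; $\Lambda^1_x(X)=\Omega^1(X)/\Omega^1_x(X)$ (when finite-dimensional, it carries the standard diffeology). The pullbacks induce linear maps $i^*_\Lambda:\Lambda^1_y(X_1)\to\Lambda^1_y(Y)$, $j^*_\Lambda:\Lambda^1_{f(y)}(X_2)\to\Lambda^1_{f(y)}(f(Y))$, $f^*_\Lambda:\Lambda^1_{f(y)}(f(Y))\to\Lambda^1_y(Y)$. Elements $\beta_1\in\Lambda^1_y(X_1)$, $\beta_2\in\Lambda^1_{f(y)}(X_2)$ are compatible if $i^*_\Lambda\beta_1=f^*_\Lambda j^*_\Lambda\beta_2$. Scalar products $g_1^\Lambda(y)$, $g_2^\Lambda(f(y))$ are compatible if $g_1^\Lambda(y)(\omega',\mu')=g_2^\Lambda(f(y))(\omega'',\mu'')$ for all compatible pairs $(\omega',\omega''),(\mu',\mu'')$. Let $\pi_{1}^{ort}$ be the $g_1^\Lambda(y)$-orthogonal projection of $\Lambda^1_y(X_1)$ onto the orthogonal complement of $\ker i^*_\Lambda$, and $\pi_2^{ort}$ the $g_2^\Lambda(f(y))$-orthogonal projection of $\Lambda^1_{f(y)}(X_2)$ onto the orthogonal complement of $\ker j^*_\Lambda$. Functionals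 $\alpha_1^*\in(\Lambda^1_y(X_1))^*$, $\alpha_2^*\in(\Lambda^1_{f(y)}(X_2))^*$ are compatible if $\alpha_1^*(\pi_1^{ort}(\beta_1))=\alpha_2^*(\pi_2^{ort}(\beta_2))$ for every compatible pair $\beta_1\in\Lambda^1_y(X_1)$, $\beta_2\in\Lambda^1_{f(y)}(X_2)$. *)

theory Defs
  imports "HOL-Analysis.Analysis"
begin

type_synonym rn = "nat \<Rightarrow> real"

text \<open>R^n = points supported on the first n coordinates; its topology is the subspace
  topology of the product topology on nat => real (= the Euclidean topology).\<close>
definition euc :: "nat \<Rightarrow> rn set" where
  "euc n = {x. \<forall>i. n \<le> i \<longrightarrow> x i = 0}"

definition open_dom :: "nat \<Rightarrow> rn set \<Rightarrow> bool" where
  "open_dom n U \<longleftrightarrow> openin (top_of_set (euc n)) U"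

definition pd :: "nat \<Rightarrow> (rn \<Rightarrow> real) \<Rightarrow> rn \<Rightarrow> real" where
  "pd i g x = deriv (\<lambda>t. g (x(i := x i + t))) 0"

fun iter_pd :: "nat list \<Rightarrow> (rn \<Rightarrow> real) \<Rightarrow> rn \<Rightarrow> real" where
  "iter_pd [] g = g"
| "iter_pd (i # is) g = pd i (iter_pd is g)"

definition smooth_fun :: "nat \<Rightarrow> rn set \<Rightarrow> (rn \<Rightarrow> real) \<Rightarrow> bool" where
  "smooth_fun n U g \<longleftrightarrow>
     (\<forall>is. set is \<subseteq> {..<n} \<longrightarrow>
        continuous_on U (iter_pd is g) \<and>
        (\<forall>i<n. \<forall>x\<in>U. (\<lambda>t. iter_pd is g (x(i := x i + t))) differentiable (at 0)))"

definition smooth_dom_map :: "nat \<Rightarrow> rn set \<Rightarrow> nat \<Rightarrow> rn set \<Rightarrow> (rn \<Rightarrow> rn) \<Rightarrow> bool" where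
  "smooth_dom_map k V n U h \<longleftrightarrow> open_dom k V \<and> open_dom n U \<and> h ` V \<subseteq> U \<and>
     (\<forall>i<n. smooth_fun k V (\<lambda>v. h v i))"

text \<open>A parametrization (n, U, p): U open in R^n, p : U -> X (extensional on U).\<close>
type_synonym 'a plot = "nat \<times> rn set \<times> (rn \<Rightarrow> 'a)"

definition wf_param :: "'a set \<Rightarrow> 'a plot \<Rightarrow> bool" where
  "wf_param X q = (case q of (n, U, p) \<Rightarrow> open_dom n U \<and> p \<in> U \<rightarrow> X \<and> p \<in> extensional U)"

definition diffeology :: "'a set \<Rightarrow> 'a plot set \<Rightarrow> bool" where
  "diffeology X D \<longleftrightarrow>
     (\<forall>q\<in>D. wf_param X q) \<and>
     (\<forall>n U x. open_dom n U \<and> x \<in> X \<longrightarrow> (n, U, restrict (\<lambda>_. x) U) \<in> D) \<and>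
     (\<forall>n U p. wf_param X (n, U, p) \<and>
        (\<forall>u\<in>U. \<exists>V. open_dom n V \<and> u \<in> V \<and> V \<subseteq> U \<and> (n, V, restrict p V) \<in> D)
        \<longrightarrow> (n, U, p) \<in> D) \<and>
     (\<forall>n U p k V h. (n, U, p) \<in> D \<and> smooth_dom_map k V n U h
        \<longrightarrow> (k, V, restrict (p \<circ> h) V) \<in> D)"

definition sub_diff :: "'a plot set \<Rightarrow> 'a set \<Rightarrow> 'a plot set" where
  "sub_diff D Y = {q \<in> D. case q of (n, U, p) \<Rightarrow> p ` U \<subseteq> Y}"

definition smooth_map :: "'a set \<Rightarrow> 'a plot set \<Rightarrow> 'b set \<Rightarrow> 'b plot set \<Rightarrow> ('a \<Rightarrow> 'b) \<Rightarrow> bool" where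
  "smooth_map X D X' D' f \<longleftrightarrow> f \<in> X \<rightarrow> X' \<and>
     (\<forall>n U p. (n, U, p) \<in> D \<longrightarrow> (n, U, restrict (f \<circ> p) U) \<in> D')"

definition diffeomorphism :: "'a set \<Rightarrow> 'a plot set \<Rightarrow> 'b set \<Rightarrow> 'b plot set \<Rightarrow> ('a \<Rightarrow> 'b) \<Rightarrow> bool" where
  "diffeomorphism X D X' D' f \<longleftrightarrow> bij_betw f X X' \<and> smooth_map X D X' D' f \<and>
     smooth_map X' D' X D (inv_into X f)"

text \<open>A 1-form assigns to each plot (n,U,p) the coefficient functions x |-> (omega_1(x),...,omega_n(x))
  of a smooth 1-form on U (zero outside U, outside D, and beyond index n).\<close>
type_synonym 'a form = "'a plot \<Rightarrow> rn \<Rightarrow> rn"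

definition zero_form :: "'a form" where
  "zero_form = (\<lambda>_ _ _. 0)"

definition form_pullback :: "nat \<Rightarrow> rn set \<Rightarrow> nat \<Rightarrow> (rn \<Rightarrow> rn) \<Rightarrow> (rn \<Rightarrow> rn) \<Rightarrow> rn \<Rightarrow> rn" where
  "form_pullback k V n h c = (\<lambda>v. if v \<in> V then
      (\<lambda>j. if j < k then (\<Sum>i<n. c (h v) i * pd j (\<lambda>w. h w i) v) else 0) else (\<lambda>_. 0))"

definition is_form :: "'a plot set \<Rightarrow> 'a form \<Rightarrow> bool" where
  "is_form D \<omega> \<longleftrightarrow>
     (\<forall>q. q \<notin> D \<longrightarrow> \<omega> q = (\<lambda>_ _. 0)) \<and>
     (\<forall>n U p. (n, U, p) \<in> D \<longrightarrow>
        (\<forall>x. x \<notin> U \<longrightarrow> \<omega> (n, U, p) x = (\<lambda>_. 0)) \<and>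
        (\<forall>x i. n \<le> i \<longrightarrow> \<omega> (n, U, p) x i = 0) \<and>
        (\<forall>i<n. smooth_fun n U (\<lambda>x. \<omega> (n, U, p) x i))) \<and>
     (\<forall>n U p k V h. (n, U, p) \<in> D \<and> smooth_dom_map k V n U h
        \<longrightarrow> \<omega> (k, V, restrict (p \<circ> h) V) = form_pullback k V n h (\<omega> (n, U, p)))"

definition Omega :: "'a plot set \<Rightarrow> 'a form set" where
  "Omega D = {\<omega>. is_form D \<omega>}"

definition origin :: rn where "origin = (\<lambda>_. 0)"

definition Omega_at :: "'a plot set \<Rightarrow> 'a \<Rightarrow> 'a form set" where
  "Omega_at D x = {\<omega> \<in> Omega D. \<forall>n U p. (n, U, p) \<in> D \<and> origin \<in> U \<and> p origin = x
       \<longrightarrow> \<omega> (n, U, p) origin = (\<lambda>_. 0)}"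

definition fadd :: "'a form \<Rightarrow> 'a form \<Rightarrow> 'a form" where
  "fadd a b = (\<lambda>q z i. a q z i + b q z i)"
definition fdiff :: "'a form \<Rightarrow> 'a form \<Rightarrow> 'a form" where
  "fdiff a b = (\<lambda>q z i. a q z i - b q z i)"
definition fscale :: "real \<Rightarrow> 'a form \<Rightarrow> 'a form" where
  "fscale r a = (\<lambda>q z i. r * a q z i)"
definition flin :: "'a form set \<Rightarrow> ('a form \<Rightarrow> real) \<Rightarrow> 'a form" where
  "flin B c = (\<lambda>q z i. \<Sum>b\<in>B. c b * b q z i)"

definition pb :: "('a \<Rightarrow> 'b) \<Rightarrow> 'a plot set \<Rightarrow> 'b form \<Rightarrow> 'a form" where
  "pb \<phi> D \<omega> = (\<lambda>q. if q \<in> D then (case q of (n, U, p) \<Rightarrow> \<omega> (n, U, restrict (\<phi> \<circ> p) U))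
                    else (\<lambda>_ _. 0))"

section \<open>Lambda^1_x(X) = Omega^1(X) / Omega^1_x(X), via representatives\<close>

text \<open>equality of classes in Lambda^1_x(X) of two representatives\<close>
definition mod_eq :: "'a plot set \<Rightarrow> 'a \<Rightarrow> 'a form \<Rightarrow> 'a form \<Rightarrow> bool" where
  "mod_eq D x a b \<longleftrightarrow> a \<in> Omega D \<and> b \<in> Omega D \<and> fdiff a b \<in> Omega_at D x"

definition fin_dim_Lambda :: "'a plot set \<Rightarrow> 'a \<Rightarrow> bool" where
  "fin_dim_Lambda D x \<longleftrightarrow> (\<exists>B. finite B \<and> B \<subseteq> Omega D \<and>
      (\<forall>\<omega>\<in>Omega D. \<exists>c. mod_eq D x \<omega> (flin B c)))"

text \<open>A scalar product on Lambda^1_x(X), given on representatives: symmetric bilinear form on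
  Omega^1(X) descending to the quotient and positive definite there.\<close>
definition scalar_prod_Lambda :: "'a plot set \<Rightarrow> 'a \<Rightarrow> ('a form \<Rightarrow> 'a form \<Rightarrow> real) \<Rightarrow> bool" where
  "scalar_prod_Lambda D x g \<longleftrightarrow>
     (\<forall>a\<in>Omega D. \<forall>b\<in>Omega D. g a b = g b a) \<and>
     (\<forall>a\<in>Omega D. \<forall>b\<in>Omega D. \<forall>c\<in>Omega D. g (fadd a b) c = g a c + g b c) \<and>
     (\<forall>r. \<forall>a\<in>Omega D. \<forall>c\<in>Omega D. g (fscale r a) c = r * g a c) \<and>
     (\<forall>a\<in>Omega_at D x. \<forall>b\<in>Omega D. g a b = 0) \<and>
     (\<forall>a\<in>Omega D. 0 \<le> g a a \<and> (g a a = 0 \<longrightarrow> a \<in> Omega_at D x))"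

text \<open>beta1 in Lambda^1_y(X1), beta2 in Lambda^1_{f y}(X2) compatible:
  i^*_Lambda beta1 = f^*_Lambda j^*_Lambda beta2 in Lambda^1_y(Y)\<close>
definition compatible_forms ::
  "'a plot set \<Rightarrow> 'b plot set \<Rightarrow> 'a set \<Rightarrow> ('a \<Rightarrow> 'b) \<Rightarrow> 'a \<Rightarrow> 'a form \<Rightarrow> 'b form \<Rightarrow> bool" where
  "compatible_forms D1 D2 Y f y \<beta>1 \<beta>2 \<longleftrightarrow> \<beta>1 \<in> Omega D1 \<and> \<beta>2 \<in> Omega D2 \<and>
     mod_eq (sub_diff D1 Y) y (pb id (sub_diff D1 Y) \<beta>1)
        (pb f (sub_diff D1 Y) (pb id (sub_diff D2 (f ` Y)) \<beta>2))"

definition compatible_sp ::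
  "'a plot set \<Rightarrow> 'b plot set \<Rightarrow> 'a set \<Rightarrow> ('a \<Rightarrow> 'b) \<Rightarrow> 'a \<Rightarrow>
   ('a form \<Rightarrow> 'a form \<Rightarrow> real) \<Rightarrow> ('b form \<Rightarrow> 'b form \<Rightarrow> real) \<Rightarrow> bool" where
  "compatible_sp D1 D2 Y f y g1 g2 \<longleftrightarrow>
     (\<forall>\<omega>1 \<omega>2 \<mu>1 \<mu>2. compatible_forms D1 D2 Y f y \<omega>1 \<omega>2 \<and> compatible_forms D1 D2 Y f y \<mu>1 \<mu>2
        \<longrightarrow> g1 \<omega>1 \<mu>1 = g2 \<omega>2 \<mu>2)"

text \<open>kernel of i^*_Lambda (resp. j^*_Lambda), as a set of representatives\<close>
definition ker_i :: "'a plot set \<Rightarrow> 'a set \<Rightarrow> 'a \<Rightarrow> 'a form set" where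
  "ker_i D1 Y y = {\<omega> \<in> Omega D1. pb id (sub_diff D1 Y) \<omega> \<in> Omega_at (sub_diff D1 Y) y}"

text \<open>w' represents the g-orthogonal projection of (the class of) w onto the g-orthogonal
  complement of K (K contains Omega_x, g descends to the quotient)\<close>
definition is_orth_proj :: "'a plot set \<Rightarrow> ('a form \<Rightarrow> 'a form \<Rightarrow> real) \<Rightarrow> 'a form set \<Rightarrow>
    'a form \<Rightarrow> 'a form \<Rightarrow> bool" where
  "is_orth_proj D g K w w' \<longleftrightarrow> w' \<in> Omega D \<and> fdiff w w' \<in> K \<and> (\<forall>k\<in>K. g w' k = 0)"

text \<open>Compatibility of functionals phi1 on Lambda^1_y(X1), phi2 on Lambda^1_{f y}(X2)
  (given on representatives): phi1(pi1 beta1) = phi2(pi2 beta2) for all compatible beta1, beta2.\<close>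
definition compatible_functionals ::
  "'a plot set \<Rightarrow> 'b plot set \<Rightarrow> 'a set \<Rightarrow> ('a \<Rightarrow> 'b) \<Rightarrow> 'a \<Rightarrow>
   ('a form \<Rightarrow> 'a form \<Rightarrow> real) \<Rightarrow> ('b form \<Rightarrow> 'b form \<Rightarrow> real) \<Rightarrow>
   ('a form \<Rightarrow> real) \<Rightarrow> ('b form \<Rightarrow> real) \<Rightarrow> bool" where
  "compatible_functionals D1 D2 Y f y g1 g2 \<phi>1 \<phi>2 \<longleftrightarrow>
     (\<forall>\<beta>1 \<beta>2 \<beta>1' \<beta>2'. compatible_forms D1 D2 Y f y \<beta>1 \<beta>2 \<and>
        is_orth_proj D1 g1 (ker_i D1 Y y) \<beta>1 \<beta>1' \<and>
        is_orth_proj D2 g2 (ker_i D2 (f ` Y) (f y)) \<beta>2 \<beta>2'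
        \<longrightarrow> \<phi>1 \<beta>1' = \<phi>2 \<beta>2')"

end

theory Submission
  imports Defs
begin

text \<open>
  Compatibility of a pair \<open>(\<beta>\<^sub>1, \<beta>\<^sub>2)\<close> only depends on \<open>\<beta>\<^sub>1\<close> modulo \<open>ker i\<^sup>*\<^sub>\<Lambda>\<close>
  and \<open>\<beta>\<^sub>2\<close> modulo \<open>ker j\<^sup>*\<^sub>\<Lambda>\<close>, so orthogonal projections of a compatible pair are compatible;
  together with the compatibility of the scalar products this makes \<open>\<alpha>\<^sub>1\<^sup>*, \<alpha>\<^sub>2\<^sup>*\<close>
  compatible whenever \<open>\<alpha>\<^sub>1, \<alpha>\<^sub>2\<close> are. Conversely, choose \<open>\<beta>\<^sub>1\<close> compatible with \<open>\<alpha>\<^sub>2\<close>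
  (possible since \<open>i\<^sup>*\<close> and \<open>f\<^sup>*j\<^sup>*\<close> have the same image) and let \<open>\<delta>'\<close> be the
  projection of \<open>\<delta> = \<alpha>\<^sub>1 - \<beta>\<^sub>1\<close> onto \<open>(ker i\<^sup>*\<^sub>\<Lambda>)\<^sup>\<bottom>\<close>. Evaluating both compatibilities on
  \<open>\<delta>'\<close> and a form compatible with it gives \<open>g\<^sub>1(\<delta>, \<delta>') = 0\<close>, hence \<open>g\<^sub>1(\<delta>', \<delta>') = 0\<close>,
  so \<open>\<delta> \<in> ker i\<^sup>*\<^sub>\<Lambda>\<close>, which says that \<open>\<alpha>\<^sub>1\<close> and \<open>\<alpha>\<^sub>2\<close> are compatible.

  Everything is phrased on representatives in \<open>\<Omega>\<^sup>1\<close>, where the scalar products are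
  positive semi-definite with radical \<open>\<Omega>\<^sup>1\<^sub>y\<close>; orthogonal projections exist by a
  Gram--Schmidt induction over a finite set spanning \<open>\<Omega>\<^sup>1\<close> modulo that radical.
\<close>

section \<open>Smoothness is preserved by linear combinations\<close>

lemma eventually_coordinate_shift_in_open_dom:
  assumes "open_dom n U" "x \<in> U" "i < n"
  shows "eventually (\<lambda>t. x(i := x i + t) \<in> U) (nhds (0::real))"
proof -
  obtain T where T: "open T" "U = T \<inter> euc n"
    using assms(1) unfolding open_dom_def openin_open by auto
  have "continuous_on UNIV (\<lambda>t::real. x(i := x i + t))"
  proof (intro continuous_on_coordinatewise_then_product)
    fix j show "continuous_on UNIV (\<lambda>t::real. (x(i := x i + t)) j)"
      by (cases "j = i") (simp_all add: continuous_intros)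
  qed
  then have "open ((\<lambda>t::real. x(i := x i + t)) -` T)"
    using open_vimage T(1) by blast
  moreover have "0 \<in> (\<lambda>t::real. x(i := x i + t)) -` T"
    using assms(2) T by auto
  ultimately have "eventually (\<lambda>t. x(i := x i + t) \<in> T) (nhds 0)"
    using eventually_nhds by blast
  moreover have "x(i := x i + t) \<in> euc n" for t
    using assms(2,3) T by (auto simp: euc_def)
  ultimately show ?thesis
    using T(2) by (auto elim: eventually_mono)
qed

lemma DERIV_eventually_linear_combination:
  fixes P G H :: "real \<Rightarrow> real"
  assumes "eventually (\<lambda>t. P t = a * G t + b * H t) (nhds 0)"
    and "G differentiable (at 0)" "H differentiable (at 0)"
  shows "DERIV P 0 :> a * deriv G 0 + b * deriv H 0"
proof -
  have "DERIV G 0 :> deriv G 0" "DERIV H 0 :> deriv H 0"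
    using assms(2,3) by (simp_all add: DERIV_deriv_iff_real_differentiable)
  then have "DERIV (\<lambda>t. a * G t + b * H t) 0 :> a * deriv G 0 + b * deriv H 0"
    by (auto intro!: derivative_eq_intros)
  then show ?thesis
    using DERIV_cong_ev[OF refl assms(1) refl] by simp
qed

lemma DERIV_iter_pd_shift_linear_combination:
  assumes U: "open_dom n U" and g: "smooth_fun n U g" and h: "smooth_fun n U h"
    and "set is \<subseteq> {..<n}" "i < n" "x \<in> U"
    and lin: "\<forall>z\<in>U. iter_pd is (\<lambda>x. a * g x + b * h x) z = a * iter_pd is g z + b * iter_pd is h z"
  shows "DERIV (\<lambda>t. iter_pd is (\<lambda>x. a * g x + b * h x) (x(i := x i + t))) 0 :>
           a * deriv (\<lambda>t. iter_pd is g (x(i := x i + t))) 0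
         + b * deriv (\<lambda>t. iter_pd is h (x(i := x i + t))) 0"
proof (rule DERIV_eventually_linear_combination)
  show "eventually (\<lambda>t. iter_pd is (\<lambda>x. a * g x + b * h x) (x(i := x i + t)) =
      a * iter_pd is g (x(i := x i + t)) + b * iter_pd is h (x(i := x i + t))) (nhds 0)"
    using eventually_coordinate_shift_in_open_dom[OF U \<open>x \<in> U\<close> \<open>i < n\<close>] lin
    by (auto elim: eventually_mono)
qed (use g h assms(4-6) in \<open>auto simp: smooth_fun_def\<close>)

lemma iter_pd_linear_combination:
  assumes "open_dom n U" "smooth_fun n U g" "smooth_fun n U h" "set is \<subseteq> {..<n}"
  shows "\<forall>x\<in>U. iter_pd is (\<lambda>x. a * g x + b * h x) x = a * iter_pd is g x + b * iter_pd is h x"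
  using assms(4)
proof (induction "is")
  case (Cons i "is")
  then have "i < n" "set is \<subseteq> {..<n}" by auto
  with Cons.IH show ?case
    using DERIV_iter_pd_shift_linear_combination[OF assms(1-3)]
    by (simp add: pd_def DERIV_imp_deriv)
qed simp

lemma smooth_fun_linear_combination:
  assumes "open_dom n U" "smooth_fun n U g" "smooth_fun n U h"
  shows "smooth_fun n U (\<lambda>x. a * g x + b * h x)"
  unfolding smooth_fun_def
proof (intro allI impI conjI ballI)
  fix "is" assume "is": "set is \<subseteq> {..<n}"
  have "continuous_on U (\<lambda>x. a * iter_pd is g x + b * iter_pd is h x)"
    using assms(2,3) "is" unfolding smooth_fun_def by (auto intro!: continuous_intros)
  then show "continuous_on U (iter_pd is (\<lambda>x. a * g x + b * h x))"
    using iter_pd_linear_combination[OF assms "is"] by (auto cong: continuous_on_cong)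
next
  fix "is" i x assume "is": "set is \<subseteq> {..<n}" and "i < n" "x \<in> U"
  then show "(\<lambda>t. iter_pd is (\<lambda>x. a * g x + b * h x) (x(i := x i + t))) differentiable at 0"
    using DERIV_iter_pd_shift_linear_combination[OF assms "is" _ _ iter_pd_linear_combination[OF assms "is"]]
    unfolding real_differentiable_def by blast
qed

section \<open>Linear combinations of differential forms\<close>

definition form_lc :: "real \<Rightarrow> real \<Rightarrow> 'a form \<Rightarrow> 'a form \<Rightarrow> 'a form" where
  "form_lc r s a b = (\<lambda>q z i. r * a q z i + s * b q z i)"

lemma fdiff_eq_form_lc: "fdiff a b = form_lc 1 (-1) a b"
  by (simp add: fdiff_def form_lc_def fun_eq_iff)

lemma fadd_fscale_eq_form_lc: "fadd (fscale r a) (fscale s b) = form_lc r s a b"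
  by (simp add: fadd_def fscale_def form_lc_def fun_eq_iff)

lemma fscale_eq_form_lc: "fscale r a = form_lc r 0 a a"
  by (simp add: fscale_def form_lc_def)

lemma form_pullback_linear_combination:
  "form_pullback k V n h (\<lambda>z i. r * c1 z i + s * c2 z i) =
   (\<lambda>z i. r * form_pullback k V n h c1 z i + s * form_pullback k V n h c2 z i)"
  unfolding form_pullback_def fun_eq_iff
  by (auto simp: sum_distrib_left sum.distrib distrib_right mult.assoc)

lemma pb_form_lc: "pb \<phi> D (form_lc r s a b) = form_lc r s (pb \<phi> D a) (pb \<phi> D b)"
  by (auto simp: pb_def form_lc_def fun_eq_iff split: prod.split)

lemma pb_fdiff: "pb \<phi> D (fdiff a b) = fdiff (pb \<phi> D a) (pb \<phi> D b)"
  unfolding fdiff_eq_form_lc by (rule pb_form_lc)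

lemma is_formI:
  assumes "\<And>q. q \<notin> D \<Longrightarrow> \<omega> q = (\<lambda>_ _. 0)"
    and "\<And>n U p x. (n, U, p) \<in> D \<Longrightarrow> x \<notin> U \<Longrightarrow> \<omega> (n, U, p) x = (\<lambda>_. 0)"
    and "\<And>n U p x i. (n, U, p) \<in> D \<Longrightarrow> n \<le> i \<Longrightarrow> \<omega> (n, U, p) x i = 0"
    and "\<And>n U p i. (n, U, p) \<in> D \<Longrightarrow> i < n \<Longrightarrow> smooth_fun n U (\<lambda>x. \<omega> (n, U, p) x i)"
    and "\<And>n U p k V h. (n, U, p) \<in> D \<Longrightarrow> smooth_dom_map k V n U h \<Longrightarrow>
           \<omega> (k, V, restrict (p \<circ> h) V) = form_pullback k V n h (\<omega> (n, U, p))"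
  shows "is_form D \<omega>"
  unfolding is_form_def using assms by simp

lemma is_formD:
  assumes "is_form D \<omega>"
  shows "q \<notin> D \<Longrightarrow> \<omega> q = (\<lambda>_ _. 0)"
    and "(n, U, p) \<in> D \<Longrightarrow> x \<notin> U \<Longrightarrow> \<omega> (n, U, p) x = (\<lambda>_. 0)"
    and "(n, U, p) \<in> D \<Longrightarrow> n \<le> i \<Longrightarrow> \<omega> (n, U, p) x i = 0"
    and "(n, U, p) \<in> D \<Longrightarrow> i < n \<Longrightarrow> smooth_fun n U (\<lambda>x. \<omega> (n, U, p) x i)"
    and "(n, U, p) \<in> D \<Longrightarrow> smooth_dom_map k V n U h \<Longrightarrow>
           \<omega> (k, V, restrict (p \<circ> h) V) = form_pullback k V n h (\<omega> (n, U, p))"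
  subgoal using assms[unfolded is_form_def, THEN conjunct1] by blast
  using assms unfolding is_form_def by auto

lemma Omega_form_lc:
  assumes open_dom: "\<And>n U p. (n, U, p) \<in> D \<Longrightarrow> open_dom n U"
    and "a \<in> Omega D" "b \<in> Omega D"
  shows "form_lc r s a b \<in> Omega D"
proof -
  have a: "is_form D a" and b: "is_form D b"
    using assms(2,3) by (auto simp: Omega_def)
  have "is_form D (form_lc r s a b)"
  proof (rule is_formI)
    fix n U p i assume "(n, U, p) \<in> D" "i < n"
    then show "smooth_fun n U (\<lambda>x. form_lc r s a b (n, U, p) x i)"
      using is_formD(4)[OF a] is_formD(4)[OF b] smooth_fun_linear_combination[OF open_dom]
      by (simp add: form_lc_def)
  next
    fix n U p k V h assume "(n, U, p) \<in> D" "smooth_dom_map k V n U h"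
    then show "form_lc r s a b (k, V, restrict (p \<circ> h) V) =
        form_pullback k V n h (form_lc r s a b (n, U, p))"
      using is_formD(5)[OF a] is_formD(5)[OF b]
      by (simp add: form_lc_def form_pullback_linear_combination[symmetric])
  qed (use is_formD(1-3)[OF a] is_formD(1-3)[OF b] in \<open>simp_all add: form_lc_def\<close>)
  then show ?thesis
    by (simp add: Omega_def)
qed

lemma zero_form_Omega: "zero_form \<in> Omega D"
proof -
  have "iter_pd is (\<lambda>_. 0) = (\<lambda>_. 0)" for "is"
    by (induction "is") (simp_all add: pd_def fun_eq_iff)
  then have "smooth_fun n U (\<lambda>_. 0)" for n U
    by (simp add: smooth_fun_def)
  then show ?thesis
    by (simp add: Omega_def is_form_def zero_form_def form_pullback_def fun_eq_iff)
qed

lemma zero_form_Omega_at: "zero_form \<in> Omega_at D x"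
  using zero_form_Omega by (auto simp: Omega_at_def zero_form_def)

lemma Omega_at_form_lc:
  assumes "\<And>n U p. (n, U, p) \<in> D \<Longrightarrow> open_dom n U"
    and "a \<in> Omega_at D x" "b \<in> Omega_at D x"
  shows "form_lc r s a b \<in> Omega_at D x"
proof -
  have "form_lc r s a b \<in> Omega D"
    using assms by (intro Omega_form_lc) (auto simp: Omega_at_def)
  then show ?thesis
    using assms(2,3) unfolding Omega_at_def by (auto simp: form_lc_def fun_eq_iff)
qed

section \<open>Forms on a subset diffeology\<close>

lemma diffeology_open_dom:
  assumes "diffeology X D" "(n, U, p) \<in> D"
  shows "open_dom n U"
  using assms by (auto simp: diffeology_def wf_param_def)

lemma sub_diff_open_dom:
  assumes "diffeology X D" "(n, U, p) \<in> sub_diff D Y"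
  shows "open_dom n U"
  using assms diffeology_open_dom by (auto simp: sub_diff_def)

lemma sub_diff_comp_smooth:
  assumes "diffeology X D" "(n, U, p) \<in> sub_diff D Y" "smooth_dom_map k V n U h"
  shows "(k, V, restrict (p \<circ> h) V) \<in> sub_diff D Y"
proof -
  have "(n, U, p) \<in> D" "p ` U \<subseteq> Y" "h ` V \<subseteq> U"
    using assms(2,3) by (auto simp: sub_diff_def smooth_dom_map_def)
  moreover have "(k, V, restrict (p \<circ> h) V) \<in> D"
    using assms(1,3) \<open>(n, U, p) \<in> D\<close> unfolding diffeology_def by blast
  ultimately show ?thesis
    unfolding sub_diff_def by auto
qed

lemma pb_id_sub_diff:
  assumes "diffeology X D"
  shows "pb id (sub_diff D Y) \<omega> = (\<lambda>q. if q \<in> sub_diff D Y then \<omega> q else (\<lambda>_ _. 0))"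
proof -
  have "\<omega> (n, U, restrict p U) = \<omega> (n, U, p)" if "(n, U, p) \<in> sub_diff D Y" for n U p
    using assms that by (auto simp: diffeology_def wf_param_def sub_diff_def extensional_restrict)
  then show ?thesis
    by (auto simp: pb_def fun_eq_iff split: prod.split)
qed

lemma pb_id_sub_diff_Omega:
  assumes "diffeology X D" "\<omega> \<in> Omega D"
  shows "pb id (sub_diff D Y) \<omega> \<in> Omega (sub_diff D Y)"
proof -
  have \<omega>: "is_form D \<omega>"
    using assms(2) by (simp add: Omega_def)
  have D: "(n, U, p) \<in> D" if "(n, U, p) \<in> sub_diff D Y" for n U p
    using that by (simp add: sub_diff_def)
  have "is_form (sub_diff D Y) (\<lambda>q. if q \<in> sub_diff D Y then \<omega> q else (\<lambda>_ _. 0))"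
  proof (rule is_formI)
    fix n U p k V h assume "(n, U, p) \<in> sub_diff D Y" "smooth_dom_map k V n U h"
    then show "(if (k, V, restrict (p \<circ> h) V) \<in> sub_diff D Y then \<omega> (k, V, restrict (p \<circ> h) V)
                else (\<lambda>_ _. 0)) =
               form_pullback k V n h (if (n, U, p) \<in> sub_diff D Y then \<omega> (n, U, p) else (\<lambda>_ _. 0))"
      using sub_diff_comp_smooth[OF assms(1)] is_formD(5)[OF \<omega> D] by simp
  qed (use is_formD(2-4)[OF \<omega> D] in simp_all)
  then show ?thesis
    using pb_id_sub_diff[OF assms(1)] by (simp add: Omega_def)
qed

lemma pb_id_sub_diff_Omega_at:
  assumes "diffeology X D" "\<omega> \<in> Omega_at D x"
  shows "pb id (sub_diff D Y) \<omega> \<in> Omega_at (sub_diff D Y) x"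
  using assms pb_id_sub_diff_Omega[OF assms(1), of \<omega> Y] pb_id_sub_diff[OF assms(1), of Y \<omega>]
  by (auto simp: Omega_at_def sub_diff_def)

lemma ker_i_form_lc:
  assumes "diffeology X D" "a \<in> ker_i D Y x" "b \<in> ker_i D Y x"
  shows "form_lc r s a b \<in> ker_i D Y x"
proof -
  have "form_lc r s a b \<in> Omega D"
    using assms by (intro Omega_form_lc diffeology_open_dom) (auto simp: ker_i_def)
  moreover have "pb id (sub_diff D Y) (form_lc r s a b) \<in> Omega_at (sub_diff D Y) x"
    using assms unfolding pb_form_lc
    by (intro Omega_at_form_lc sub_diff_open_dom) (auto simp: ker_i_def)
  ultimately show ?thesis
    by (simp add: ker_i_def)
qed

lemma Omega_at_subset_ker_i:
  assumes "diffeology X D"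
  shows "Omega_at D x \<subseteq> ker_i D Y x"
  using pb_id_sub_diff_Omega_at[OF assms] by (auto simp: ker_i_def Omega_at_def)

section \<open>Orthogonal projections for a semi-definite scalar product\<close>

lemma flin_insert:
  "finite B \<Longrightarrow> b \<notin> B \<Longrightarrow> flin (insert b B) c = form_lc (c b) 1 b (flin B c)"
  by (simp add: flin_def form_lc_def fun_eq_iff)

lemma flin_linear_combination:
  "flin B (\<lambda>x. r * c x + s * d x) = form_lc r s (flin B c) (flin B d)"
  by (simp add: flin_def form_lc_def fun_eq_iff sum_distrib_left sum.distrib distrib_right mult.assoc)

lemma flin_zero_coeffs: "flin B (\<lambda>_. 0) = zero_form"
  by (simp add: flin_def zero_form_def)

locale semi_inner_form =
  fixes V N :: "'a form set" and g :: "'a form \<Rightarrow> 'a form \<Rightarrow> real"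
  assumes V_form_lc: "\<And>a b r s. a \<in> V \<Longrightarrow> b \<in> V \<Longrightarrow> form_lc r s a b \<in> V"
    and N_form_lc: "\<And>a b r s. a \<in> N \<Longrightarrow> b \<in> N \<Longrightarrow> form_lc r s a b \<in> N"
    and zero_form_N: "zero_form \<in> N"
    and N_subset_V: "N \<subseteq> V"
    and symmetric: "\<And>a b. a \<in> V \<Longrightarrow> b \<in> V \<Longrightarrow> g a b = g b a"
    and linear_left: "\<And>a b c r s. a \<in> V \<Longrightarrow> b \<in> V \<Longrightarrow> c \<in> V \<Longrightarrow>
                        g (form_lc r s a b) c = r * g a c + s * g b c"
    and radical: "\<And>a b. a \<in> N \<Longrightarrow> b \<in> V \<Longrightarrow> g a b = 0"
    and definite: "\<And>a. a \<in> V \<Longrightarrow> g a a = 0 \<Longrightarrow> a \<in> N"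
begin

lemma linear_right:
  assumes "a \<in> V" "b \<in> V" "c \<in> V"
  shows "g c (form_lc r s a b) = r * g c a + s * g c b"
  using assms linear_left symmetric V_form_lc by metis

lemma fdiff_V: "a \<in> V \<Longrightarrow> b \<in> V \<Longrightarrow> fdiff a b \<in> V"
  unfolding fdiff_eq_form_lc by (rule V_form_lc)

end

locale semi_inner_subspace = semi_inner_form +
  fixes K :: "'a form set"
  assumes K_form_lc: "\<And>a b r s. a \<in> K \<Longrightarrow> b \<in> K \<Longrightarrow> form_lc r s a b \<in> K"
    and N_subset_K: "N \<subseteq> K"
    and K_subset_V: "K \<subseteq> V"
begin

definition Kspan :: "'a form set \<Rightarrow> 'a form set" where
  "Kspan B = {k \<in> K. \<exists>c. fdiff k (flin B c) \<in> N}"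

lemma Kspan_subset_V: "Kspan B \<subseteq> V"
  using K_subset_V by (auto simp: Kspan_def)

lemma N_subset_Kspan: "N \<subseteq> Kspan B"
proof
  fix n assume "n \<in> N"
  moreover have "fdiff n (flin B (\<lambda>_. 0)) = n"
    by (simp add: flin_zero_coeffs fdiff_def zero_form_def)
  ultimately have "fdiff n (flin B (\<lambda>_. 0)) \<in> N"
    by simp
  then show "n \<in> Kspan B"
    using N_subset_K \<open>n \<in> N\<close> unfolding Kspan_def by blast
qed

lemma Kspan_form_lc:
  assumes "k1 \<in> Kspan B" "k2 \<in> Kspan B"
  shows "form_lc r s k1 k2 \<in> Kspan B"
proof -
  obtain c1 c2 where "fdiff k1 (flin B c1) \<in> N" "fdiff k2 (flin B c2) \<in> N"
    and "k1 \<in> K" "k2 \<in> K"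
    using assms unfolding Kspan_def by auto
  moreover have "fdiff (form_lc r s k1 k2) (flin B (\<lambda>x. r * c1 x + s * c2 x)) =
      form_lc r s (fdiff k1 (flin B c1)) (fdiff k2 (flin B c2))"
    by (simp add: flin_linear_combination fdiff_def form_lc_def fun_eq_iff algebra_simps)
  ultimately have "fdiff (form_lc r s k1 k2) (flin B (\<lambda>x. r * c1 x + s * c2 x)) \<in> N"
    using N_form_lc by simp
  then show ?thesis
    unfolding Kspan_def using K_form_lc \<open>k1 \<in> K\<close> \<open>k2 \<in> K\<close> by blast
qed

lemma Kspan_mono_insert:
  assumes "finite B" "b \<notin> B"
  shows "Kspan B \<subseteq> Kspan (insert b B)"
proof
  fix k assume "k \<in> Kspan B"
  then obtain c where "fdiff k (flin B c) \<in> N" "k \<in> K"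
    unfolding Kspan_def by auto
  moreover have "flin B (c(b := 0)) = flin B c"
    unfolding flin_def using assms(2) by (intro ext sum.cong) auto
  then have "flin (insert b B) (c(b := 0)) = flin B c"
    using assms by (simp add: flin_insert form_lc_def)
  ultimately show "k \<in> Kspan (insert b B)"
    unfolding Kspan_def by (metis (mono_tags, lifting) mem_Collect_eq)
qed

lemma Kspan_insert_decomp:
  assumes "finite B" "b \<notin> B"
    and u: "u \<in> Kspan (insert b B)" "u \<notin> Kspan B"
    and k: "k \<in> Kspan (insert b B)"
  shows "\<exists>t. form_lc 1 (-t) k u \<in> Kspan B"
proof -
  obtain cu where cu: "fdiff u (flin (insert b B) cu) \<in> N" and "u \<in> K"
    using u(1) unfolding Kspan_def by auto
  obtain ck where ck: "fdiff k (flin (insert b B) ck) \<in> N" and "k \<in> K"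
    using k unfolding Kspan_def by auto
  have "cu b \<noteq> 0"
  proof
    assume "cu b = 0"
    then have "flin (insert b B) cu = flin B cu"
      using assms(1,2) by (simp add: flin_def)
    then show False
      using cu \<open>u \<in> K\<close> u(2) unfolding Kspan_def by auto
  qed
  define t where "t = ck b / cu b"
  have "fdiff (form_lc 1 (-t) k u) (flin B (\<lambda>x. ck x - t * cu x)) =
        form_lc 1 (-t) (fdiff k (flin (insert b B) ck)) (fdiff u (flin (insert b B) cu))"
    using assms(1,2) \<open>cu b \<noteq> 0\<close>
    by (simp add: t_def flin_def fdiff_def form_lc_def fun_eq_iff sum_subtractf sum_distrib_left
        sum_negf algebra_simps)
  then have "fdiff (form_lc 1 (-t) k u) (flin B (\<lambda>x. ck x - t * cu x)) \<in> N"
    using N_form_lc[OF ck cu] by simp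
  moreover have "form_lc 1 (-t) k u \<in> K"
    using K_form_lc \<open>k \<in> K\<close> \<open>u \<in> K\<close> by blast
  ultimately show ?thesis
    unfolding Kspan_def by blast
qed

lemma Kspan_insert_orth_direction:
  assumes B: "finite B" "b \<notin> B"
    and IH: "\<And>v. v \<in> V \<Longrightarrow> \<exists>k\<in>Kspan B. \<forall>k'\<in>Kspan B. g (fdiff v k) k' = 0"
    and u: "u \<in> Kspan (insert b B)" "u \<notin> Kspan B"
  obtains uo where "uo \<in> Kspan (insert b B)" "g uo uo \<noteq> 0" "\<forall>k'\<in>Kspan B. g uo k' = 0"
    and "\<And>k. k \<in> Kspan (insert b B) \<Longrightarrow> \<exists>t. \<exists>k1\<in>Kspan B. k = form_lc 1 t k1 uo"
proof -
  obtain ku where ku: "ku \<in> Kspan B" and u_orth: "\<forall>k'\<in>Kspan B. g (fdiff u ku) k' = 0"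
    using IH u(1) Kspan_subset_V by blast
  have "ku \<in> Kspan (insert b B)"
    using ku Kspan_mono_insert[OF B] by auto
  then have uo: "fdiff u ku \<in> Kspan (insert b B)"
    unfolding fdiff_eq_form_lc using Kspan_form_lc[OF u(1)] by blast
  have "g (fdiff u ku) (fdiff u ku) \<noteq> 0"
  proof
    assume "g (fdiff u ku) (fdiff u ku) = 0"
    then have "fdiff u ku \<in> Kspan B"
      using definite uo Kspan_subset_V N_subset_Kspan by blast
    then have "form_lc 1 1 (fdiff u ku) ku \<in> Kspan B"
      using Kspan_form_lc ku by blast
    then show False
      using u(2) by (simp add: fdiff_def form_lc_def)
  qed
  moreover have "\<exists>t. \<exists>k1\<in>Kspan B. k = form_lc 1 t k1 (fdiff u ku)"
    if k: "k \<in> Kspan (insert b B)" for k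
  proof -
    obtain t where "form_lc 1 (-t) k u \<in> Kspan B"
      using Kspan_insert_decomp[OF B u k] by blast
    then have "form_lc 1 t (form_lc 1 (-t) k u) ku \<in> Kspan B"
      using Kspan_form_lc ku by blast
    moreover have "k = form_lc 1 t (form_lc 1 t (form_lc 1 (-t) k u) ku) (fdiff u ku)"
      by (simp add: fdiff_def form_lc_def fun_eq_iff algebra_simps)
    ultimately show ?thesis
      by blast
  qed
  ultimately show ?thesis
    using that uo u_orth by blast
qed

lemma orth_decomp_insert:
  assumes B: "finite B" "b \<notin> B"
    and IH: "\<And>v. v \<in> V \<Longrightarrow> \<exists>k\<in>Kspan B. \<forall>k'\<in>Kspan B. g (fdiff v k) k' = 0"
    and "w \<in> V"
  shows "\<exists>k\<in>Kspan (insert b B). \<forall>k'\<in>Kspan (insert b B). g (fdiff w k) k' = 0"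
proof (cases "Kspan (insert b B) \<subseteq> Kspan B")
  case True
  then show ?thesis
    using IH[OF \<open>w \<in> V\<close>] Kspan_mono_insert[OF B] by blast
next
  case False
  then obtain u where "u \<in> Kspan (insert b B)" "u \<notin> Kspan B"
    by blast
  then obtain uo where uo: "uo \<in> Kspan (insert b B)" "g uo uo \<noteq> 0" "\<forall>k'\<in>Kspan B. g uo k' = 0"
    and decomp: "\<And>k. k \<in> Kspan (insert b B) \<Longrightarrow> \<exists>t. \<exists>k1\<in>Kspan B. k = form_lc 1 t k1 uo"
    using Kspan_insert_orth_direction[OF B IH] by blast
  obtain kw where kw: "kw \<in> Kspan B" and w_orth: "\<forall>k'\<in>Kspan B. g (fdiff w kw) k' = 0"
    using IH \<open>w \<in> V\<close> by blast
  define wo where "wo = fdiff w kw"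
  define sc where "sc = g wo uo / g uo uo"
  have V: "uo \<in> V" "wo \<in> V"
    using uo kw \<open>w \<in> V\<close> Kspan_subset_V unfolding wo_def by (auto intro: fdiff_V)
  show ?thesis
  proof (intro bexI ballI)
    show "form_lc 1 sc kw uo \<in> Kspan (insert b B)"
      using Kspan_form_lc uo(1) kw Kspan_mono_insert[OF B] by blast
    fix k assume "k \<in> Kspan (insert b B)"
    then obtain t k1 where k1: "k1 \<in> Kspan B" and k: "k = form_lc 1 t k1 uo"
      using decomp by blast
    have "k1 \<in> V"
      using k1 Kspan_subset_V by blast
    have "fdiff w (form_lc 1 sc kw uo) = form_lc 1 (-sc) wo uo"
      by (simp add: wo_def fdiff_def form_lc_def fun_eq_iff)
    then have "g (fdiff w (form_lc 1 sc kw uo)) k =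
        (g wo k1 + t * g wo uo) - sc * (g uo k1 + t * g uo uo)"
      using V \<open>k1 \<in> V\<close> k by (simp add: linear_left linear_right V_form_lc algebra_simps)
    also have "\<dots> = 0"
      using w_orth uo(2,3) k1 by (simp add: wo_def sc_def field_simps)
    finally show "g (fdiff w (form_lc 1 sc kw uo)) k = 0" .
  qed
qed

lemma orth_decomp:
  assumes "finite B" "w \<in> V"
  shows "\<exists>k\<in>Kspan B. \<forall>k'\<in>Kspan B. g (fdiff w k) k' = 0"
  using assms
proof (induction B arbitrary: w rule: finite_induct)
  case empty
  have "g (fdiff w zero_form) k = 0" if "k \<in> Kspan {}" for k
  proof -
    have "fdiff k (flin {} c) = k" for c
      by (simp add: flin_def fdiff_def)
    then have "k \<in> N"
      using that unfolding Kspan_def by auto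
    moreover have "fdiff w zero_form = w"
      by (simp add: fdiff_def zero_form_def)
    ultimately show ?thesis
      using radical symmetric N_subset_V empty.prems by auto
  qed
  then show ?case
    using zero_form_N N_subset_Kspan by blast
next
  case (insert b B)
  then show ?case
    using orth_decomp_insert by blast
qed

lemma orth_proj_exists:
  assumes "finite B" "\<And>v. v \<in> V \<Longrightarrow> \<exists>c. fdiff v (flin B c) \<in> N" "w \<in> V"
  shows "\<exists>w'. w' \<in> V \<and> fdiff w w' \<in> K \<and> (\<forall>k\<in>K. g w' k = 0)"
proof -
  have "Kspan B = K"
    using assms(2) K_subset_V unfolding Kspan_def by blast
  then obtain k where "k \<in> K" "\<forall>k'\<in>K. g (fdiff w k) k' = 0"
    using orth_decomp[OF assms(1,3)] by blast
  moreover have "fdiff w (fdiff w k) = k"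
    by (simp add: fdiff_def)
  moreover have "fdiff w k \<in> V"
    using fdiff_V assms(3) \<open>k \<in> K\<close> K_subset_V by blast
  ultimately show ?thesis
    by metis
qed

lemma mem_K_if_orth_part_orthogonal:
  assumes "w \<in> V" "w' \<in> V" "fdiff w w' \<in> K" "\<forall>k\<in>K. g w' k = 0" "g w w' = 0"
  shows "w \<in> K"
proof -
  have "fdiff w w' \<in> V"
    using assms(3) K_subset_V by blast
  have "g w w' = g (fdiff w w') w' + g w' w'"
    using linear_left[OF \<open>fdiff w w' \<in> V\<close> assms(2) assms(2), of 1 1]
    by (simp add: fdiff_def form_lc_def)
  moreover have "g (fdiff w w') w' = 0"
    using assms(3,4) symmetric[OF \<open>fdiff w w' \<in> V\<close> assms(2)] by simp
  ultimately have "w' \<in> N"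
    using assms(2,5) definite by simp
  then have "form_lc 1 1 (fdiff w w') w' \<in> K"
    using assms(3) N_subset_K K_form_lc by blast
  then show ?thesis
    by (simp add: fdiff_def form_lc_def)
qed

end

lemma semi_inner_subspace_ker_i:
  assumes "diffeology X D" "scalar_prod_Lambda D x g"
  shows "semi_inner_subspace (Omega D) (Omega_at D x) g (ker_i D Y x)"
proof -
  have form_lc: "form_lc r s a b \<in> Omega D" if "a \<in> Omega D" "b \<in> Omega D" for a b r s
    using that by (intro Omega_form_lc diffeology_open_dom[OF assms(1)])
  have lin: "g (form_lc r s a b) c = r * g a c + s * g b c"
    if "a \<in> Omega D" "b \<in> Omega D" "c \<in> Omega D" for a b c r s
  proof -
    have "fscale r a \<in> Omega D" "fscale s b \<in> Omega D"
      using that form_lc unfolding fscale_eq_form_lc by blast+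
    then have "g (fadd (fscale r a) (fscale s b)) c = g (fscale r a) c + g (fscale s b) c"
      using assms(2) that(3) unfolding scalar_prod_Lambda_def by blast
    then show ?thesis
      using assms(2) that unfolding scalar_prod_Lambda_def fadd_fscale_eq_form_lc by simp
  qed
  show ?thesis
  proof unfold_locales
    fix a b r s
    show "a \<in> Omega D \<Longrightarrow> b \<in> Omega D \<Longrightarrow> form_lc r s a b \<in> Omega D"
      by (rule form_lc)
    show "a \<in> Omega_at D x \<Longrightarrow> b \<in> Omega_at D x \<Longrightarrow> form_lc r s a b \<in> Omega_at D x"
      using diffeology_open_dom[OF assms(1)] by (rule Omega_at_form_lc)
    show "a \<in> ker_i D Y x \<Longrightarrow> b \<in> ker_i D Y x \<Longrightarrow> form_lc r s a b \<in> ker_i D Y x"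
      using assms(1) by (rule ker_i_form_lc)
  next
    show "Omega_at D x \<subseteq> ker_i D Y x"
      using assms(1) by (rule Omega_at_subset_ker_i)
  next
    show "zero_form \<in> Omega_at D x"
      by (rule zero_form_Omega_at)
  next
    show "Omega_at D x \<subseteq> Omega D" "ker_i D Y x \<subseteq> Omega D"
      by (auto simp: Omega_at_def ker_i_def)
  next
    fix a b c r s assume "a \<in> Omega D" "b \<in> Omega D" "c \<in> Omega D"
    then show "g (form_lc r s a b) c = r * g a c + s * g b c"
      by (rule lin)
  qed (use assms(2) in \<open>simp_all add: scalar_prod_Lambda_def\<close>)
qed

lemma is_orth_proj_exists:
  assumes "diffeology X D" "scalar_prod_Lambda D x g" "fin_dim_Lambda D x" "w \<in> Omega D"
  shows "\<exists>w'. is_orth_proj D g (ker_i D Y x) w w'"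
proof -
  interpret semi_inner_subspace "Omega D" "Omega_at D x" g "ker_i D Y x"
    using assms(1,2) by (rule semi_inner_subspace_ker_i)
  obtain B where "finite B" "\<forall>\<omega>\<in>Omega D. \<exists>c. fdiff \<omega> (flin B c) \<in> Omega_at D x"
    using assms(3) unfolding fin_dim_Lambda_def mod_eq_def by blast
  then show ?thesis
    using orth_proj_exists assms(4) unfolding is_orth_proj_def by blast
qed

lemma is_orth_proj_self:
  assumes "diffeology X D" "w \<in> Omega D" "\<forall>k\<in>ker_i D Y x. g w k = 0"
  shows "is_orth_proj D g (ker_i D Y x) w w"
proof -
  have "fdiff w w = zero_form"
    by (simp add: fdiff_def zero_form_def)
  then show ?thesis
    using assms zero_form_Omega_at Omega_at_subset_ker_i[OF assms(1)]
    unfolding is_orth_proj_def by (metis subsetD)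
qed

section \<open>Compatibility across the gluing map\<close>

locale gluing_data =
  fixes X1 :: "'a set" and D1 :: "'a plot set" and X2 :: "'b set" and D2 :: "'b plot set"
    and Y :: "'a set" and f :: "'a \<Rightarrow> 'b"
  assumes diffeology1: "diffeology X1 D1" and diffeology2: "diffeology X2 D2"
    and f_smooth: "smooth_map Y (sub_diff D1 Y) (f ` Y) (sub_diff D2 (f ` Y)) f"
    and same_image: "pb id (sub_diff D1 Y) ` Omega D1 =
         (pb f (sub_diff D1 Y) \<circ> pb id (sub_diff D2 (f ` Y))) ` Omega D2"
begin

abbreviation i_pb :: "'a form \<Rightarrow> 'a form" where
  "i_pb \<equiv> pb id (sub_diff D1 Y)"

abbreviation fj_pb :: "'b form \<Rightarrow> 'a form" where
  "fj_pb \<omega> \<equiv> pb f (sub_diff D1 Y) (pb id (sub_diff D2 (f ` Y)) \<omega>)"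

lemma i_pb_Omega: "\<beta> \<in> Omega D1 \<Longrightarrow> i_pb \<beta> \<in> Omega (sub_diff D1 Y)"
  using diffeology1 by (rule pb_id_sub_diff_Omega)

lemma ex_i_pb_eq_fj_pb: "\<omega> \<in> Omega D2 \<Longrightarrow> \<exists>\<beta>\<in>Omega D1. i_pb \<beta> = fj_pb \<omega>"
proof -
  assume "\<omega> \<in> Omega D2"
  then have "fj_pb \<omega> \<in> i_pb ` Omega D1"
    unfolding same_image by auto
  then show ?thesis
    by (auto simp: image_iff)
qed

lemma ex_fj_pb_eq_i_pb: "\<beta> \<in> Omega D1 \<Longrightarrow> \<exists>\<omega>\<in>Omega D2. i_pb \<beta> = fj_pb \<omega>"
proof -
  assume "\<beta> \<in> Omega D1"
  then have "i_pb \<beta> \<in> (pb f (sub_diff D1 Y) \<circ> pb id (sub_diff D2 (f ` Y))) ` Omega D2"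
    unfolding same_image[symmetric] by simp
  then show ?thesis
    by auto
qed

lemma fj_pb_Omega: "\<omega> \<in> Omega D2 \<Longrightarrow> fj_pb \<omega> \<in> Omega (sub_diff D1 Y)"
  using ex_i_pb_eq_fj_pb i_pb_Omega by fastforce

lemma fj_pb_Omega_at:
  assumes "\<omega> \<in> ker_i D2 (f ` Y) (f y)"
  shows "fj_pb \<omega> \<in> Omega_at (sub_diff D1 Y) y"
  unfolding Omega_at_def
proof (intro CollectI conjI allI impI)
  show "fj_pb \<omega> \<in> Omega (sub_diff D1 Y)"
    using assms fj_pb_Omega by (simp add: ker_i_def)
  fix n U p assume p: "(n, U, p) \<in> sub_diff D1 Y \<and> origin \<in> U \<and> p origin = y"
  then have "(n, U, restrict (f \<circ> p) U) \<in> sub_diff D2 (f ` Y)"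
    using f_smooth unfolding smooth_map_def by blast
  moreover have "restrict (f \<circ> p) U origin = f y"
    using p by simp
  ultimately have "pb id (sub_diff D2 (f ` Y)) \<omega> (n, U, restrict (f \<circ> p) U) origin = (\<lambda>_. 0)"
    using assms p unfolding ker_i_def Omega_at_def by blast
  then show "fj_pb \<omega> (n, U, p) origin = (\<lambda>_. 0)"
    using p by (simp add: pb_def)
qed

lemma compatible_forms_iff:
  "compatible_forms D1 D2 Y f y \<beta>1 \<beta>2 \<longleftrightarrow> \<beta>1 \<in> Omega D1 \<and> \<beta>2 \<in> Omega D2 \<and>
     fdiff (i_pb \<beta>1) (fj_pb \<beta>2) \<in> Omega_at (sub_diff D1 Y) y"
  using i_pb_Omega fj_pb_Omega unfolding compatible_forms_def mod_eq_def by blast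

lemma compatible_forms_if_eq:
  assumes "\<beta>1 \<in> Omega D1" "\<beta>2 \<in> Omega D2" "i_pb \<beta>1 = fj_pb \<beta>2"
  shows "compatible_forms D1 D2 Y f y \<beta>1 \<beta>2"
proof -
  have "fdiff (i_pb \<beta>1) (fj_pb \<beta>2) = zero_form"
    using assms(3) by (simp add: fdiff_def zero_form_def)
  then show ?thesis
    using assms(1,2) zero_form_Omega_at unfolding compatible_forms_iff by metis
qed

lemma compatible_forms_modulo_ker_i:
  assumes "compatible_forms D1 D2 Y f y \<beta>1 \<beta>2" "\<beta>1' \<in> Omega D1" "\<beta>2' \<in> Omega D2"
    and "fdiff \<beta>1 \<beta>1' \<in> ker_i D1 Y y" "fdiff \<beta>2 \<beta>2' \<in> ker_i D2 (f ` Y) (f y)"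
  shows "compatible_forms D1 D2 Y f y \<beta>1' \<beta>2'"
proof -
  have open_dom: "\<And>n U p. (n, U, p) \<in> sub_diff D1 Y \<Longrightarrow> open_dom n U"
    using diffeology1 by (rule sub_diff_open_dom)
  have "fdiff (i_pb \<beta>1) (fj_pb \<beta>2) \<in> Omega_at (sub_diff D1 Y) y"
    and "fdiff (i_pb \<beta>1) (i_pb \<beta>1') \<in> Omega_at (sub_diff D1 Y) y"
    and "fdiff (fj_pb \<beta>2) (fj_pb \<beta>2') \<in> Omega_at (sub_diff D1 Y) y"
    using assms(1,4) fj_pb_Omega_at[OF assms(5)]
    by (auto simp: compatible_forms_iff ker_i_def pb_fdiff[symmetric])
  then have "form_lc 1 1 (form_lc 1 (-1) (fdiff (i_pb \<beta>1) (fj_pb \<beta>2)) (fdiff (i_pb \<beta>1) (i_pb \<beta>1')))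
      (fdiff (fj_pb \<beta>2) (fj_pb \<beta>2')) \<in> Omega_at (sub_diff D1 Y) y"
    by (intro Omega_at_form_lc open_dom)
  moreover have "form_lc 1 1 (form_lc 1 (-1) (fdiff (i_pb \<beta>1) (fj_pb \<beta>2)) (fdiff (i_pb \<beta>1) (i_pb \<beta>1')))
      (fdiff (fj_pb \<beta>2) (fj_pb \<beta>2')) = fdiff (i_pb \<beta>1') (fj_pb \<beta>2')"
    by (simp add: fdiff_def form_lc_def fun_eq_iff)
  ultimately show ?thesis
    using assms(2,3) unfolding compatible_forms_iff by simp
qed

lemma compatible_forms_orth_proj:
  assumes "compatible_forms D1 D2 Y f y \<beta>1 \<beta>2"
    and "is_orth_proj D1 g1 (ker_i D1 Y y) \<beta>1 \<beta>1'"
    and "is_orth_proj D2 g2 (ker_i D2 (f ` Y) (f y)) \<beta>2 \<beta>2'"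
  shows "compatible_forms D1 D2 Y f y \<beta>1' \<beta>2'"
  using assms compatible_forms_modulo_ker_i unfolding is_orth_proj_def by blast

lemma compatible_functionals_if_compatible_forms:
  assumes "compatible_sp D1 D2 Y f y g1 g2" "compatible_forms D1 D2 Y f y \<alpha>1 \<alpha>2"
  shows "compatible_functionals D1 D2 Y f y g1 g2 (g1 \<alpha>1) (g2 \<alpha>2)"
  using assms compatible_forms_orth_proj
  unfolding compatible_functionals_def compatible_sp_def by blast

lemma compatible_forms_if_compatible_functionals:
  assumes sp1: "scalar_prod_Lambda D1 y g1" and sp2: "scalar_prod_Lambda D2 (f y) g2"
    and fd1: "fin_dim_Lambda D1 y" and fd2: "fin_dim_Lambda D2 (f y)"
    and csp: "compatible_sp D1 D2 Y f y g1 g2"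
    and \<alpha>: "\<alpha>1 \<in> Omega D1" "\<alpha>2 \<in> Omega D2"
    and cf: "compatible_functionals D1 D2 Y f y g1 g2 (g1 \<alpha>1) (g2 \<alpha>2)"
  shows "compatible_forms D1 D2 Y f y \<alpha>1 \<alpha>2"
proof -
  interpret S1: semi_inner_subspace "Omega D1" "Omega_at D1 y" g1 "ker_i D1 Y y"
    using diffeology1 sp1 by (rule semi_inner_subspace_ker_i)
  obtain \<beta>1 where \<beta>1: "\<beta>1 \<in> Omega D1" "i_pb \<beta>1 = fj_pb \<alpha>2"
    using ex_i_pb_eq_fj_pb \<alpha>(2) by blast
  define \<delta> where "\<delta> = fdiff \<alpha>1 \<beta>1"
  have \<delta>: "\<delta> \<in> Omega D1"
    unfolding \<delta>_def using \<alpha>(1) \<beta>1(1) by (rule S1.fdiff_V)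
  obtain \<delta>' where \<delta>': "is_orth_proj D1 g1 (ker_i D1 Y y) \<delta> \<delta>'"
    using is_orth_proj_exists[OF diffeology1 sp1 fd1 \<delta>] by blast
  then have \<delta>'_self: "is_orth_proj D1 g1 (ker_i D1 Y y) \<delta>' \<delta>'"
    using is_orth_proj_self[OF diffeology1] unfolding is_orth_proj_def by blast
  obtain \<gamma> where \<gamma>: "\<gamma> \<in> Omega D2" "i_pb \<delta>' = fj_pb \<gamma>"
    using ex_fj_pb_eq_i_pb \<delta>' unfolding is_orth_proj_def by blast
  obtain \<gamma>' where \<gamma>': "is_orth_proj D2 g2 (ker_i D2 (f ` Y) (f y)) \<gamma> \<gamma>'"
    using is_orth_proj_exists[OF diffeology2 sp2 fd2 \<gamma>(1)] by blast
  have "compatible_forms D1 D2 Y f y \<beta>1 \<alpha>2"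
    using \<beta>1(1) \<alpha>(2) \<beta>1(2) by (rule compatible_forms_if_eq)
  have "compatible_forms D1 D2 Y f y \<delta>' \<gamma>"
    using \<delta>' \<gamma> compatible_forms_if_eq unfolding is_orth_proj_def by blast
  then have "g1 \<alpha>1 \<delta>' = g2 \<alpha>2 \<gamma>'" and "g1 \<beta>1 \<delta>' = g2 \<alpha>2 \<gamma>'"
    using cf csp \<delta>'_self \<gamma>' \<open>compatible_forms D1 D2 Y f y \<beta>1 \<alpha>2\<close> compatible_forms_orth_proj
    unfolding compatible_functionals_def compatible_sp_def by blast+
  then have "g1 \<delta> \<delta>' = 0"
    using S1.linear_left[OF \<alpha>(1) \<beta>1(1), of \<delta>' 1 "-1"] \<delta>'
    by (simp add: \<delta>_def fdiff_eq_form_lc is_orth_proj_def)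
  then have "\<delta> \<in> ker_i D1 Y y"
    using S1.mem_K_if_orth_part_orthogonal \<delta> \<delta>' unfolding is_orth_proj_def by blast
  then show ?thesis
    using \<alpha> \<beta>1(2) by (simp add: compatible_forms_iff ker_i_def \<delta>_def pb_fdiff)
qed

end

theorem mainTheorem6:
  fixes X1 :: "'a set" and D1 :: "'a plot set"
    and X2 :: "'b set" and D2 :: "'b plot set"
    and Y :: "'a set" and f :: "'a \<Rightarrow> 'b" and y :: 'a
    and g1 :: "'a form \<Rightarrow> 'a form \<Rightarrow> real" and g2 :: "'b form \<Rightarrow> 'b form \<Rightarrow> real"
    and \<alpha>1 :: "'a form" and \<alpha>2 :: "'b form"
  assumes "diffeology X1 D1" and "diffeology X2 D2"
    and "Y \<subseteq> X1" and "f ` Y \<subseteq> X2"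
    and "diffeomorphism Y (sub_diff D1 Y) (f ` Y) (sub_diff D2 (f ` Y)) f"
    and "pb id (sub_diff D1 Y) ` Omega D1 =
         (pb f (sub_diff D1 Y) \<circ> pb id (sub_diff D2 (f ` Y))) ` Omega D2"
    and "y \<in> Y"
    and "fin_dim_Lambda D1 y" and "fin_dim_Lambda D2 (f y)"
    and "scalar_prod_Lambda D1 y g1" and "scalar_prod_Lambda D2 (f y) g2"
    and "compatible_sp D1 D2 Y f y g1 g2"
    and "\<alpha>1 \<in> Omega D1" and "\<alpha>2 \<in> Omega D2"
  shows "compatible_functionals D1 D2 Y f y g1 g2 (g1 \<alpha>1) (g2 \<alpha>2) \<longleftrightarrow>
         compatible_forms D1 D2 Y f y \<alpha>1 \<alpha>2"
proof -
  interpret gluing_data X1 D1 X2 D2 Y f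
    using assms(1,2,5,6) by unfold_locales (simp_all add: diffeomorphism_def)
  show ?thesis
    using compatible_functionals_if_compatible_forms[OF assms(12)]
      compatible_forms_if_compatible_functionals[OF assms(10,11,8,9,12,13,14)] by blast
qed

end
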